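(* Let $0<\alpha,\beta<\tfrac12$ and $g\in C_b^1(M)$. The map $h_g$ is well defined on $A$, injective, and $h_g(A)=A_g$, with inverse $h_g^{-1}:A_g\to A$ given by $h_g^{-1}(x,y,z,w)=\big(x,y,z,w-\sum_{i\ge0}\beta^i g(B_\alpha^{-i-1}(x,y))\big)$; moreover $B(v)=h_g^{-1}(B_g(h_g(v)))$ for $v\in A$. Furthermore: (i) if $\alpha>\beta$, $h_g$ is bi-Lipschitz; (ii) if $\alpha=\beta$, $h_g$ and $h_g^{-1}$ are Hölder continuous for every Hölder exponent $\rho<1$; (iii) if $\alpha<\beta$, $h_g$ is Hölder continuous with Hölder exponent $\rho=\frac{\log\beta}{\log\alpha}$.
   Context: $M=[0,1)\times\mathbb R$. $B_\alpha(x,y)=(2x,\alpha y)$ if $0\le x<\tfrac12$ and $(2x-1,\alpha y+1-\alpha)$ if $\tfrac12\le x<1$; likewise $B_\beta$. $C_b^1(M)$: $C^1$ functions on the interior of $M$ with bounded function and derivative, extended continuously to the closure (they are Lipschitz). $B_g(x,y,z,w)=(B_\alpha(x,y),B_\beta(z,w)+(0,g(x,y)))$ on $M\times M$, and $B=B_0$. $A_\alpha\subset[0,1]$ is the Cantor set with $A_\alpha=\alpha A_\alpha\cup(\alpha A_\alpha+1-\alpha)$ (similarly $A_\beta$), $A=[0,1)\times A_\alpha\times[0,1)\times A_\beta$. On $[0,1)\times A_\alpha$, $B_\alpha^{-1}(x,y)=(x/2,y/\alpha)$ if $y\le\tfrac12$ and $((x+1)/2,(y-(1-\alpha))/\alpha)$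 if $y>\tfrac12$. $h_g(x,y,z,w)=\big(x,y,z,w+\sum_{i\ge0}\beta^i g(B_\alpha^{-i-1}(x,y))\big)$. For $\delta>0$ let $V=[0,1)\times[-\delta,1+\delta]\times[0,1)\times[-\delta-\frac{\|g\|_\infty}{1-\beta},1+\delta+\frac{\|g\|_\infty}{1-\beta}]$ (so $B_g(V)\subset V$), and the attractor of $B_g$ is $A_g=\bigcap_{n\in\mathbb N}B_g^n(V)$. Continuity properties refer to the Euclidean metric on $A$ and $A_g$. *)

theory Defs
  imports "HOL-Analysis.Analysis"
begin

text \<open>Points of M x M are represented as (x,y,z,w) :: real * real * real * real;
  the product metric on nested pairs is the Euclidean metric.\<close>

definition strip :: "(real \<times> real) set" where
  "strip = {0..<1} \<times> UNIV"

definition bak :: "real \<Rightarrow> real \<times> real \<Rightarrow> real \<times> real" where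
  "bak a = (\<lambda>(x, y). if x < 1/2 then (2*x, a*y) else (2*x - 1, a*y + 1 - a))"

definition bak_inv :: "real \<Rightarrow> real \<times> real \<Rightarrow> real \<times> real" where
  "bak_inv a = (\<lambda>(x, y). if y \<le> 1/2 then (x/2, y/a) else ((x+1)/2, (y - (1 - a))/a))"

definition cantor :: "real \<Rightarrow> real set" where
  "cantor a = (THE K. K \<subseteq> {0..1} \<and> compact K \<and> K \<noteq> {} \<and>
       K = (\<lambda>y. a*y) ` K \<union> (\<lambda>y. a*y + 1 - a) ` K)"

definition Cb1 :: "(real \<times> real \<Rightarrow> real) \<Rightarrow> bool" where
  "Cb1 g \<longleftrightarrow>
     (\<exists>g' :: real \<times> real \<Rightarrow> (real \<times> real) \<Rightarrow>\<^sub>L real.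
        (\<forall>p\<in>{0<..<1} \<times> UNIV. (g has_derivative blinfun_apply (g' p)) (at p)) \<and>
        continuous_on ({0<..<1} \<times> UNIV) g' \<and>
        (\<exists>C. \<forall>p\<in>{0<..<1} \<times> UNIV. norm (g' p) \<le> C)) \<and>
     bounded (g ` strip) \<and>
     (\<exists>G. continuous_on ({0..1} \<times> UNIV) G \<and> (\<forall>p\<in>strip. G p = g p))"

definition supnorm :: "(real \<times> real \<Rightarrow> real) \<Rightarrow> real" where
  "supnorm g = (SUP p\<in>strip. \<bar>g p\<bar>)"

text \<open>The skew product B_g on M x M; B = B_0.\<close>
definition Bg :: "real \<Rightarrow> real \<Rightarrow> (real \<times> real \<Rightarrow> real) \<Rightarrow>
    real \<times> real \<times> real \<times> real \<Rightarrow> real \<times> real \<times> real \<times> real" where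
  "Bg a b g = (\<lambda>(x, y, z, w).
     (fst (bak a (x, y)), snd (bak a (x, y)),
      fst (bak b (z, w)), snd (bak b (z, w)) + g (x, y)))"

definition bigA :: "real \<Rightarrow> real \<Rightarrow> (real \<times> real \<times> real \<times> real) set" where
  "bigA a b = {0..<1} \<times> cantor a \<times> {0..<1} \<times> cantor b"

definition hg :: "real \<Rightarrow> real \<Rightarrow> (real \<times> real \<Rightarrow> real) \<Rightarrow>
    real \<times> real \<times> real \<times> real \<Rightarrow> real \<times> real \<times> real \<times> real" where
  "hg a b g = (\<lambda>(x, y, z, w).
     (x, y, z, w + (\<Sum>i. b ^ i * g ((bak_inv a ^^ Suc i) (x, y)))))"

definition hg_inv :: "real \<Rightarrow> real \<Rightarrow> (real \<times> real \<Rightarrow> real) \<Rightarrow>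
    real \<times> real \<times> real \<times> real \<Rightarrow> real \<times> real \<times> real \<times> real" where
  "hg_inv a b g = (\<lambda>(x, y, z, w).
     (x, y, z, w - (\<Sum>i. b ^ i * g ((bak_inv a ^^ Suc i) (x, y)))))"

definition trapV :: "real \<Rightarrow> (real \<times> real \<Rightarrow> real) \<Rightarrow> real \<Rightarrow>
    (real \<times> real \<times> real \<times> real) set" where
  "trapV b g \<delta> = {0..<1} \<times> {-\<delta>..1+\<delta>} \<times> {0..<1} \<times>
     {-\<delta> - supnorm g / (1 - b) .. 1 + \<delta> + supnorm g / (1 - b)}"

definition Ag :: "real \<Rightarrow> real \<Rightarrow> (real \<times> real \<Rightarrow> real) \<Rightarrow> real \<Rightarrow>
    (real \<times> real \<times> real \<times> real) set" where
  "Ag a b g \<delta> = (\<Inter>n. (Bg a b g ^^ n) ` trapV b g \<delta>)"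

definition bilipschitz_on :: "'a::metric_space set \<Rightarrow> ('a \<Rightarrow> 'b::metric_space) \<Rightarrow> bool" where
  "bilipschitz_on S f \<longleftrightarrow> (\<exists>C>0. \<forall>u\<in>S. \<forall>v\<in>S.
      dist (f u) (f v) \<le> C * dist u v \<and> dist u v \<le> C * dist (f u) (f v))"

definition holder_on :: "'a::metric_space set \<Rightarrow> ('a \<Rightarrow> 'b::metric_space) \<Rightarrow> real \<Rightarrow> bool" where
  "holder_on S f \<rho> \<longleftrightarrow> (\<exists>C. \<forall>u\<in>S. \<forall>v\<in>S. dist (f u) (f v) \<le> C * dist u v powr \<rho>)"

end

theory Submission
  imports Defs
begin

text \<open>
  The fibre shift \<phi>(p) = (\<Sum>i. \<beta>^i g(B_\<alpha>^-(i+1) p)) solves the cohomological equation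
  \<phi>(B_\<alpha> p) = g(p) + \<beta> \<phi>(p) wherever the inverse branch undoes B_\<alpha>, so h_g conjugates
  B to B_g on a neighbourhood of A. As B maps A onto itself, h_g(A) is a B_g-invariant
  part of V and hence lies in A_g. Conversely a point of A_g is, for every n, the image
  under B_g^n of a point that has already entered that neighbourhood; applying h_g^-1 turns
  it into the image under B^n of a point of a fixed bounded band, and these images shrink
  geometrically onto the Cantor sets.

  For the regularity, B_\<alpha>^-k stretches vertical distances by \<alpha>^-k as long as two points
  follow the same branches, while points following different branches are \<alpha>^k (1 - 2\<alpha>)
  apart. With g Lipschitz this bounds |\<phi>(p) - \<phi>(p')| by
  L |x - x'| + M (\<Sum>i. \<beta>^i min 1 (t / \<alpha>^(i+1))) with t = |y - y'|, and this sum is O(t)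
  for \<beta> < \<alpha>, O(t^\<rho>) for every \<rho> < 1 if \<beta> = \<alpha>, and O(t^(log \<beta> / log \<alpha>)) for \<alpha> < \<beta>.
\<close>

section \<open>The Cantor set\<close>

lemma closed_mem_if_geometric_approx:
  fixes K :: "real set"
  assumes "closed K" "0 < a" "a < 1" "\<And>n. \<exists>k\<in>K. \<bar>y - k\<bar> \<le> c * a ^ n"
  shows "y \<in> K"
proof -
  have "\<exists>k\<in>K. dist k y < e" if "e > 0" for e
  proof -
    obtain n where n: "a ^ n < e / (\<bar>c\<bar> + 1)"
      using real_arch_pow_inv[of "e/(\<bar>c\<bar>+1)" a] \<open>e > 0\<close> assms(2,3) by auto
    obtain k where k: "k \<in> K" "\<bar>y - k\<bar> \<le> c * a ^ n" using assms(4) by blast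
    have "c * a^n \<le> (\<bar>c\<bar>+1) * a^n" using assms(2) by (intro mult_right_mono) auto
    also have "\<dots> < e" using n by (simp add: field_simps)
    finally have "dist k y < e" using k by (simp add: dist_real_def abs_minus_commute)
    then show ?thesis using k by blast
  qed
  then show ?thesis using closed_approachable[OF assms(1)] by blast
qed

definition self_similar :: "real \<Rightarrow> real set \<Rightarrow> bool" where
  "self_similar a K \<longleftrightarrow> K \<subseteq> {0..1} \<and> compact K \<and> K \<noteq> {} \<and>
       K = (\<lambda>y. a*y) ` K \<union> (\<lambda>y. a*y + 1 - a) ` K"

definition cantor_cover :: "real \<Rightarrow> real set" where
  "cantor_cover a = {0..a} \<union> {1-a..1}"

definition cantor_expand :: "real \<Rightarrow> real \<Rightarrow> real" where
  "cantor_expand a y = (if y \<le> 1/2 then y/a else (y - (1-a))/a)"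

primrec cantor_stage :: "real \<Rightarrow> nat \<Rightarrow> real set" where
  "cantor_stage a 0 = cantor_cover a"
| "cantor_stage a (Suc n) = cantor_cover a \<inter> cantor_expand a -` cantor_stage a n"

(* The points whose cantor_expand-orbit never leaves cantor_cover: an explicit self-similar set,
   which makes the definite description in cantor meaningful. *)
definition cantor_limit :: "real \<Rightarrow> real set" where
  "cantor_limit a = (\<Inter>n. cantor_stage a n)"

lemma cantor_limit_iff:
  "y \<in> cantor_limit a \<longleftrightarrow> y \<in> cantor_cover a \<and> cantor_expand a y \<in> cantor_limit a"
proof -
  have "y \<in> cantor_limit a \<longleftrightarrow> y \<in> cantor_stage a 0 \<and> (\<forall>n. y \<in> cantor_stage a (Suc n))"
    unfolding cantor_limit_def by (metis INT_iff UNIV_I old.nat.exhaust)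
  then show ?thesis by (auto simp: cantor_limit_def)
qed

locale baker_ratio =
  fixes a :: real
  assumes pos: "0 < a" and less_half: "a < 1/2"
begin

lemma cantor_cover_subset: "cantor_cover a \<subseteq> {0..1}"
  using less_half by (auto simp: cantor_cover_def)

lemma closed_cantor_stage: "closed (cantor_stage a n)"
proof (induction n)
  case 0
  then show ?case by (simp add: cantor_cover_def closed_Un)
next
  case (Suc n)
  have "continuous_on {0..a} (cantor_expand a)"
    by (rule continuous_on_eq[of _ "\<lambda>y. y / a"])
       (use pos less_half in \<open>auto intro!: continuous_intros simp: cantor_expand_def\<close>)
  moreover have "continuous_on {1-a..1} (cantor_expand a)"
    by (rule continuous_on_eq[of _ "\<lambda>y. (y - (1-a)) / a"])
       (use pos less_half in \<open>auto intro!: continuous_intros simp: cantor_expand_def\<close>)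
  ultimately have "continuous_on (cantor_cover a) (cantor_expand a)"
    unfolding cantor_cover_def by (intro continuous_on_closed_Un) auto
  then show ?case using Suc.IH
    by (simp add: continuous_closed_preimage cantor_cover_def closed_Un)
qed

lemma self_similar_cantor_limit: "self_similar a (cantor_limit a)"
proof -
  have sub: "cantor_limit a \<subseteq> {0..1}"
    using cantor_limit_iff cantor_cover_subset by blast
  have "closed (cantor_limit a)"
    unfolding cantor_limit_def using closed_cantor_stage by auto
  then have "compact (cantor_limit a)"
    using sub bounded_subset[OF bounded_closed_interval] by (simp add: compact_eq_bounded_closed)
  moreover have "0 \<in> cantor_limit a"
  proof -
    have "0 \<in> cantor_stage a n" for n
      by (induction n) (use pos in \<open>auto simp: cantor_cover_def cantor_expand_def\<close>)
    then show ?thesis by (simp add: cantor_limit_def)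
  qed
  moreover have "cantor_limit a = (\<lambda>y. a*y) ` cantor_limit a \<union> (\<lambda>y. a*y + 1 - a) ` cantor_limit a"
  proof (intro equalityI subsetI)
    fix y assume y: "y \<in> cantor_limit a"
    then have "y = a * cantor_expand a y \<or> y = a * cantor_expand a y + 1 - a"
      using pos by (auto simp: cantor_expand_def)
    then show "y \<in> (\<lambda>y. a*y) ` cantor_limit a \<union> (\<lambda>y. a*y + 1 - a) ` cantor_limit a"
      using y cantor_limit_iff by blast
  next
    fix y assume "y \<in> (\<lambda>y. a*y) ` cantor_limit a \<union> (\<lambda>y. a*y + 1 - a) ` cantor_limit a"
    then obtain k where k: "k \<in> cantor_limit a" and y: "y = a*k \<or> y = a*k + 1 - a" by blast
    have "0 \<le> k" "k \<le> 1" using k sub by auto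
    then have ak: "a*k \<le> a" "0 \<le> a*k" using pos by (auto simp: mult_left_le)
    from y have "y \<in> cantor_cover a \<and> cantor_expand a y = k"
    proof
      assume "y = a*k"
      then have "y \<le> 1/2" using ak less_half by linarith
      then show ?thesis using \<open>y = a*k\<close> ak pos by (auto simp: cantor_cover_def cantor_expand_def)
    next
      assume "y = a*k + 1 - a"
      then have "\<not> y \<le> 1/2" using ak less_half by linarith
      then show ?thesis using \<open>y = a*k + 1 - a\<close> ak pos by (auto simp: cantor_cover_def cantor_expand_def)
    qed
    then show "y \<in> cantor_limit a" using k cantor_limit_iff by blast
  qed
  ultimately show ?thesis using sub by (auto simp: self_similar_def)
qed

lemma self_similar_approx:
  assumes "self_similar a K1" "self_similar a K2" "y \<in> K1"
  shows "\<exists>k\<in>K2. \<bar>y - k\<bar> \<le> a ^ n"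
  using assms(3)
proof (induction n arbitrary: y)
  case 0
  obtain k where "k \<in> K2" using assms(2) unfolding self_similar_def by blast
  moreover have "y \<in> {0..1}" "k \<in> {0..1}"
    using 0 assms(1,2) \<open>k \<in> K2\<close> unfolding self_similar_def by blast+
  ultimately show ?case by (intro bexI[of _ k]) auto
next
  case (Suc n)
  obtain y1 where y1: "y1 \<in> K1" and y: "y = a*y1 \<or> y = a*y1 + 1 - a"
    using Suc.prems assms(1) unfolding self_similar_def by blast
  obtain k where k: "k \<in> K2" "\<bar>y1 - k\<bar> \<le> a^n" using Suc.IH y1 by blast
  have images: "a*k \<in> K2" "a*k + 1 - a \<in> K2"
    using k(1) assms(2) unfolding self_similar_def by blast+
  have close: "\<bar>a*y1 - a*k\<bar> \<le> a^Suc n"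
    using k(2) pos by (simp add: abs_mult right_diff_distrib[symmetric] mult_left_mono)
  from y show ?case
  proof
    assume "y = a*y1"
    then show ?case using close by (intro bexI[OF _ images(1)]) simp
  next
    assume "y = a*y1 + 1 - a"
    then show ?case using close by (intro bexI[OF _ images(2)]) simp
  qed
qed

lemma self_similar_unique:
  assumes "self_similar a K1" "self_similar a K2"
  shows "K1 = K2"
proof -
  have "K1 \<subseteq> K2" if "self_similar a K1" "self_similar a K2" for K1 K2
  proof
    fix y assume "y \<in> K1"
    have "closed K2" using that(2) compact_imp_closed unfolding self_similar_def by blast
    then show "y \<in> K2"
      by (rule closed_mem_if_geometric_approx[where a=a and c=1])
         (use pos less_half self_similar_approx[OF that \<open>y \<in> K1\<close>] in auto)
  qed
  then show ?thesis using assms by blast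
qed

lemma self_similar_cantor: "self_similar a (cantor a)"
proof -
  have "cantor a = (THE K. self_similar a K)" unfolding cantor_def self_similar_def ..
  also have "\<dots> = cantor_limit a"
    by (rule the_equality) (use self_similar_cantor_limit self_similar_unique in blast)+
  finally show ?thesis using self_similar_cantor_limit by simp
qed

lemma cantor_subset: "cantor a \<subseteq> {0..1}"
  and cantor_nonempty: "cantor a \<noteq> {}"
  and closed_cantor: "closed (cantor a)"
  using self_similar_cantor compact_imp_closed unfolding self_similar_def by blast+

lemma mem_cantor_if_approx:
  assumes "\<And>n. \<exists>k\<in>cantor a. \<bar>y - k\<bar> \<le> c * a ^ n"
  shows "y \<in> cantor a"
  by (rule closed_mem_if_geometric_approx[OF closed_cantor pos]) (use less_half assms in auto)

lemma cantor_scale: "k \<in> cantor a \<Longrightarrow> a*k \<in> cantor a"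
  and cantor_scale_shift: "k \<in> cantor a \<Longrightarrow> a*k + 1 - a \<in> cantor a"
  using self_similar_cantor unfolding self_similar_def by blast+

lemma cantor_cases:
  assumes "y \<in> cantor a"
  obtains k where "k \<in> cantor a" "y = a*k" "0 \<le> y" "y \<le> a"
        | k where "k \<in> cantor a" "y = a*k + 1 - a" "1 - a \<le> y" "y \<le> 1"
proof -
  obtain k where k: "k \<in> cantor a" "y = a*k \<or> y = a*k + 1 - a"
    using assms self_similar_cantor unfolding self_similar_def by blast
  then have "0 \<le> k" "k \<le> 1" using cantor_subset by auto
  then have "a*k \<le> a" "0 \<le> a*k" using pos by (auto simp: mult_left_le)
  then show ?thesis using k that by auto
qed

lemma cantor_low_branch:
  assumes "y \<in> cantor a" "y \<le> 1/2"
  shows "y/a \<in> cantor a" "y \<le> a"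
  using assms(1) by (cases rule: cantor_cases; use pos less_half assms(2) in auto)+

lemma cantor_high_branch:
  assumes "y \<in> cantor a" "1/2 < y"
  shows "(y - (1-a))/a \<in> cantor a" "1 - a \<le> y"
  using assms(1) by (cases rule: cantor_cases; use pos less_half assms(2) in auto)+

end

section \<open>The baker map and its inverse branches\<close>

definition band :: "real \<Rightarrow> (real \<times> real) set" where
  "band t = {0..<1} \<times> {-t..1+t}"

lemma bak_mem_band:
  assumes "0 \<le> a" "a \<le> 1" "0 \<le> t" "p \<in> band t"
  shows "bak a p \<in> band (a*t)"
proof -
  obtain x y where p: "p = (x, y)" "x \<in> {0..<1}" "y \<in> {-t..1+t}"
    using assms(4) by (auto simp: band_def)
  have "a * (-t) \<le> a*y" "a * y \<le> a * (1+t)"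
    by (rule mult_left_mono; use assms p in simp)+
  then show ?thesis using assms p by (auto simp: bak_def band_def algebra_simps)
qed

lemma bak_iterate_mem_band:
  assumes "0 \<le> a" "a \<le> 1" "0 \<le> t" "p \<in> band t"
  shows "(bak a ^^ n) p \<in> band (a^n * t)"
proof (induction n)
  case (Suc n)
  have "0 \<le> a^n * t" using assms by simp
  then show ?case using bak_mem_band[OF assms(1,2) _ Suc.IH] by (simp add: mult.assoc)
qed (use assms in simp)

lemma band_mono: "s \<le> t \<Longrightarrow> band s \<subseteq> band t"
  by (auto simp: band_def)

lemma fst_bak_inv_iterate:
  "fst p \<in> {0..<1} \<Longrightarrow> fst ((bak_inv a ^^ n) p) \<in> {0..<1}"
  by (induction n) (auto simp: bak_inv_def split: prod.splits)

lemma snd_bak: "snd (bak a (x, y)) = a * y + (if x < 1/2 then 0 else 1 - a)"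
  and fst_bak: "fst (bak a (x, y)) = fst (bak a' (x, y'))"
  by (auto simp: bak_def)

context baker_ratio
begin

lemma bak_inv_mem:
  assumes "p \<in> {0..<1} \<times> cantor a"
  shows "bak_inv a p \<in> {0..<1} \<times> cantor a"
  using assms cantor_low_branch cantor_high_branch by (auto simp: bak_inv_def split: prod.splits)

lemma bak_inv_iterate_mem:
  "p \<in> {0..<1} \<times> cantor a \<Longrightarrow> (bak_inv a ^^ n) p \<in> {0..<1} \<times> cantor a"
  by (induction n) (simp_all add: bak_inv_mem)

lemma bak_bak_inv:
  assumes "p \<in> {0..<1} \<times> cantor a"
  shows "bak a (bak_inv a p) = p"
  using assms pos cantor_low_branch cantor_high_branch
  by (auto simp: bak_inv_def bak_def field_simps split: prod.splits)

(* On this band the test a*y \<le> 1/2 still picks the branch that bak used, so bak_inv undoes bak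
   also off the Cantor set. *)
definition collar_width :: real where
  "collar_width = (1 - 2*a) / (4*a)"

lemma collar_width_pos: "0 < collar_width"
  using pos less_half by (simp add: collar_width_def)

lemma bak_inv_bak:
  assumes "p \<in> band collar_width"
  shows "bak_inv a (bak a p) = p"
proof -
  obtain x y where p: "p = (x, y)" and "- collar_width \<le> y" "y \<le> 1 + collar_width"
    using assms by (auto simp: band_def)
  have "a*y \<le> a * (1 + collar_width)" "a * (- collar_width) \<le> a*y"
    by (rule mult_left_mono; use \<open>- collar_width \<le> y\<close> \<open>y \<le> 1 + collar_width\<close> pos in simp)+
  moreover have "a * (1 + collar_width) = (1 + 2*a)/4" "a * (- collar_width) = - (1 - 2*a)/4"
    using pos by (simp_all add: collar_width_def field_simps)
  ultimately have "a*y \<le> 1/2" "a - 1/2 < a*y" using less_half by auto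
  then show ?thesis using pos p by (auto simp: bak_inv_def bak_def)
qed

lemma bak_iterate_near_cantor:
  assumes "0 \<le> R" "p \<in> band R"
  shows "fst ((bak a ^^ n) p) \<in> {0..<1} \<and> (\<exists>k\<in>cantor a. \<bar>snd ((bak a ^^ n) p) - k\<bar> \<le> (1 + R) * a ^ n)"
proof (induction n)
  case 0
  obtain k where "k \<in> cantor a" using cantor_nonempty by blast
  moreover have "k \<in> {0..1}" using calculation cantor_subset by blast
  ultimately show ?case using assms by (auto simp: band_def intro!: bexI[of _ k])
next
  case (Suc n)
  obtain x y where xy: "(bak a ^^ n) p = (x, y)" by (cases "(bak a ^^ n) p")
  obtain k where k: "k \<in> cantor a" "\<bar>y - k\<bar> \<le> (1 + R) * a ^ n" and x: "x \<in> {0..<1}"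
    using Suc xy by auto
  have close: "\<bar>a*y - a*k\<bar> \<le> (1 + R) * a ^ Suc n"
    using k(2) pos by (auto simp: abs_mult right_diff_distrib[symmetric] mult_left_mono mult.left_commute)
  show ?case
  proof (cases "x < 1/2")
    case True
    then show ?thesis using xy x close cantor_scale[OF k(1)] by (auto simp: bak_def intro!: bexI[of _ "a*k"])
  next
    case False
    then show ?thesis using xy x close cantor_scale_shift[OF k(1)]
      by (auto simp: bak_def intro!: bexI[of _ "a*k + 1 - a"])
  qed
qed

lemma bak_iterates_subset_cantor:
  assumes "0 \<le> R" "\<And>n. p \<in> (bak a ^^ n) ` band R"
  shows "p \<in> {0..<1} \<times> cantor a"
proof -
  have approx: "fst p \<in> {0..<1} \<and> (\<exists>k\<in>cantor a. \<bar>snd p - k\<bar> \<le> (1 + R) * a ^ n)" for n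
    using assms(2)[of n] bak_iterate_near_cantor[OF assms(1)] by blast
  then have "snd p \<in> cantor a" by (intro mem_cantor_if_approx[where c = "1 + R"]) blast
  then show ?thesis using approx[of 0] by (simp add: mem_Times_iff)
qed

end

section \<open>The fibre shift of the conjugacy\<close>

lemma Cb1_abs_le_supnorm:
  assumes "Cb1 g" "p \<in> strip"
  shows "\<bar>g p\<bar> \<le> supnorm g"
proof -
  obtain B where "\<forall>q\<in>strip. \<bar>g q\<bar> \<le> B"
    using assms(1) unfolding Cb1_def bounded_iff by auto
  then have "bdd_above ((\<lambda>q. \<bar>g q\<bar>) ` strip)" by (auto intro: bdd_aboveI2)
  then show ?thesis unfolding supnorm_def using assms(2) by (rule cSUP_upper2) auto
qed

lemma supnorm_nonneg: "Cb1 g \<Longrightarrow> 0 \<le> supnorm g"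
  using Cb1_abs_le_supnorm[of g "(0,0)"] by (auto simp: strip_def)

lemma continuous_lipschitz_closure:
  fixes G :: "'a::metric_space \<Rightarrow> real"
  assumes "continuous_on (closure U) G"
    and "\<And>p q. p \<in> U \<Longrightarrow> q \<in> U \<Longrightarrow> \<bar>G p - G q\<bar> \<le> C * dist p q"
    and "p \<in> closure U" "q \<in> closure U"
  shows "\<bar>G p - G q\<bar> \<le> C * dist p q"
proof -
  have "(\<lambda>z. \<bar>G (fst z) - G (snd z)\<bar> - C * dist (fst z) (snd z)) (p, q) \<le> 0"
  proof (rule continuous_le_on_closure[where S="U \<times> U"])
    show "continuous_on (closure (U \<times> U)) (\<lambda>z. \<bar>G (fst z) - G (snd z)\<bar> - C * dist (fst z) (snd z))"
      unfolding closure_Times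
      by (intro continuous_intros continuous_on_compose2[OF assms(1)]) auto
    show "(p, q) \<in> closure (U \<times> U)" using assms(3,4) by (simp add: closure_Times)
  qed (use assms(2) in auto)
  then show ?thesis by simp
qed

lemma Cb1_lipschitz:
  assumes "Cb1 g"
  obtains L where "0 \<le> L" "\<And>p q. p \<in> strip \<Longrightarrow> q \<in> strip \<Longrightarrow> \<bar>g p - g q\<bar> \<le> L * dist p q"
proof -
  define U :: "(real \<times> real) set" where "U = {0<..<1} \<times> UNIV"
  obtain g' :: "real \<times> real \<Rightarrow> (real \<times> real) \<Rightarrow>\<^sub>L real" and C where
    deriv: "\<forall>p\<in>U. (g has_derivative blinfun_apply (g' p)) (at p)" and
    bound: "\<forall>p\<in>U. norm (g' p) \<le> C"
    using assms unfolding Cb1_def U_def by blast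
  obtain G where G: "continuous_on ({0..1} \<times> UNIV) G" "\<forall>p\<in>strip. G p = g p"
    using assms unfolding Cb1_def by blast
  have closure_U: "closure U = {0..1} \<times> UNIV" unfolding U_def by (simp add: closure_Times)
  have U_strip: "U \<subseteq> strip" unfolding U_def strip_def by auto
  have lipschitz_U: "\<bar>G p - G q\<bar> \<le> C * dist p q" if "p \<in> U" "q \<in> U" for p q
  proof -
    have "norm (g p - g q) \<le> C * norm (p - q)"
      by (rule differentiable_bound[where f'="\<lambda>p. blinfun_apply (g' p)", OF _ _ _ that])
         (use deriv bound in \<open>auto simp: U_def norm_blinfun.rep_eq intro: convex_Times has_derivative_at_withinI\<close>)
    moreover have "G p = g p" "G q = g q" using G(2) U_strip that by auto
    ultimately show ?thesis by (simp add: dist_norm)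
  qed
  show ?thesis
  proof (rule that[of "max C 0"])
    fix p q assume "p \<in> strip" "q \<in> strip"
    then have "p \<in> closure U" "q \<in> closure U" using closure_U by (auto simp: strip_def)
    then have "\<bar>G p - G q\<bar> \<le> C * dist p q"
      using continuous_lipschitz_closure[of U G C p q, OF _ lipschitz_U] G(1) closure_U by simp
    also have "\<dots> \<le> max C 0 * dist p q" by (intro mult_right_mono) auto
    finally show "\<bar>g p - g q\<bar> \<le> max C 0 * dist p q" using G(2) \<open>p \<in> strip\<close> \<open>q \<in> strip\<close> by simp
  qed simp
qed

definition hg_shift :: "real \<Rightarrow> real \<Rightarrow> (real \<times> real \<Rightarrow> real) \<Rightarrow> real \<times> real \<Rightarrow> real" where
  "hg_shift a b g p = (\<Sum>i. b ^ i * g ((bak_inv a ^^ Suc i) p))"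

lemma hg_eq: "hg a b g (x, y, z, w) = (x, y, z, w + hg_shift a b g (x, y))"
  and hg_inv_eq: "hg_inv a b g (x, y, z, w) = (x, y, z, w - hg_shift a b g (x, y))"
  by (simp_all add: hg_def hg_inv_def hg_shift_def)

lemma hg_inv_hg: "hg_inv a b g (hg a b g v) = v"
  and hg_hg_inv: "hg a b g (hg_inv a b g v) = v"
  by (cases v; simp add: hg_eq hg_inv_eq)+

context
  fixes b :: real and g :: "real \<times> real \<Rightarrow> real"
  assumes b_nonneg: "0 \<le> b" and b_less_1: "b < 1" and g: "Cb1 g"
begin

lemma norm_hg_shift_term_le:
  "fst p \<in> {0..<1} \<Longrightarrow> norm (b ^ i * g ((bak_inv a ^^ Suc i) p)) \<le> b ^ i * supnorm g"
proof -
  assume "fst p \<in> {0..<1}"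
  then have "(bak_inv a ^^ Suc i) p \<in> strip"
    using fst_bak_inv_iterate[where a=a and n="Suc i"] by (simp add: strip_def mem_Times_iff)
  then show ?thesis using Cb1_abs_le_supnorm[OF g] b_nonneg by (simp add: abs_mult mult_left_mono)
qed

lemma geometric_supnorm_sums: "(\<lambda>i. b ^ i * supnorm g) sums (supnorm g / (1 - b))"
  using sums_mult2[OF geometric_sums[of b], of "supnorm g"] b_nonneg b_less_1 by simp

lemma hg_shift_sums:
  assumes "fst p \<in> {0..<1}"
  shows "(\<lambda>i. b ^ i * g ((bak_inv a ^^ Suc i) p)) sums hg_shift a b g p"
proof -
  have "summable (\<lambda>i. b ^ i * g ((bak_inv a ^^ Suc i) p))"
    using norm_hg_shift_term_le[OF assms] geometric_supnorm_sums
    by (blast intro: summable_comparison_test' sums_summable)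
  then show ?thesis by (simp add: hg_shift_def summable_sums)
qed

lemma abs_hg_shift_le:
  assumes "fst p \<in> {0..<1}"
  shows "\<bar>hg_shift a b g p\<bar> \<le> supnorm g / (1 - b)"
  using norm_suminf_le[OF norm_hg_shift_term_le[OF assms] sums_summable[OF geometric_supnorm_sums]]
    geometric_supnorm_sums by (simp add: sums_iff hg_shift_def)

lemma hg_shift_bak:
  assumes "fst p \<in> {0..<1}" "bak_inv a (bak a p) = p"
  shows "hg_shift a b g (bak a p) = g p + b * hg_shift a b g p"
proof -
  have "(\<lambda>i. b ^ Suc i * g ((bak_inv a ^^ Suc i) p)) sums (b * hg_shift a b g p)"
    using sums_mult[OF hg_shift_sums[OF assms(1)], of b] by (simp add: mult.assoc)
  then have "(\<lambda>i. b ^ i * g ((bak_inv a ^^ i) p)) sums (b * hg_shift a b g p + g p)"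
    using sums_Suc_iff[of "\<lambda>i. b ^ i * g ((bak_inv a ^^ i) p)"] by simp
  moreover have "(bak_inv a ^^ Suc i) (bak a p) = (bak_inv a ^^ i) p" for i
    using assms(2) by (simp only: funpow_Suc_right o_apply)
  ultimately show ?thesis unfolding hg_shift_def by (simp add: sums_iff)
qed

end

section \<open>Conjugacy and the attractor\<close>

definition base_part :: "real \<times> real \<times> real \<times> real \<Rightarrow> real \<times> real" where
  "base_part v = (fst v, fst (snd v))"

lemma base_part_Bg: "base_part (Bg a b f v) = bak a (base_part v)"
  and fiber_Bg_zero: "snd (snd (Bg a b (\<lambda>_. 0) v)) = bak b (snd (snd v))"
  by (cases v; simp add: Bg_def base_part_def)+

lemma base_part_Bg_iterate: "base_part ((Bg a b f ^^ n) v) = (bak a ^^ n) (base_part v)"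
  and fiber_Bg_zero_iterate: "snd (snd ((Bg a b (\<lambda>_. 0) ^^ n) v)) = (bak b ^^ n) (snd (snd v))"
  by (induction n) (simp_all add: base_part_Bg fiber_Bg_zero)

lemma base_part_hg [simp]: "base_part (hg a b g v) = base_part v"
  and base_part_hg_inv [simp]: "base_part (hg_inv a b g v) = base_part v"
  by (cases v; simp add: hg_eq hg_inv_eq base_part_def)+

lemma mem_bigA_iff:
  "v \<in> bigA a b \<longleftrightarrow> base_part v \<in> {0..<1} \<times> cantor a \<and> snd (snd v) \<in> {0..<1} \<times> cantor b"
  by (cases v) (auto simp: bigA_def base_part_def)

lemma mem_trapV_iff:
  "v \<in> trapV b g \<delta> \<longleftrightarrow> base_part v \<in> band \<delta> \<and> snd (snd v) \<in> band (\<delta> + supnorm g / (1 - b))"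
  by (cases v) (auto simp: trapV_def band_def base_part_def)

locale baker_skew = base: baker_ratio a + fiber: baker_ratio b for a b :: real +
  fixes g :: "real \<times> real \<Rightarrow> real"
  assumes Cb1: "Cb1 g"
begin

lemma fiber_less_1: "b < 1"
  using fiber.less_half by simp

(* Points of the attractor are only known to be images of points of V, not of A, so the
   conjugacy is needed on this neighbourhood of A. *)
definition collar :: "(real \<times> real \<times> real \<times> real) set" where
  "collar = {v. base_part v \<in> band base.collar_width}"

lemma Bg_mem_collar:
  assumes "v \<in> collar"
  shows "Bg a b f v \<in> collar"
proof -
  have "bak a (base_part v) \<in> band (a * base.collar_width)"
    using assms base.pos base.less_half base.collar_width_pos
    by (intro bak_mem_band) (auto simp: collar_def)
  moreover have "a * base.collar_width \<le> base.collar_width"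
    using base.less_half base.collar_width_pos by (simp add: mult_le_cancel_right1)
  ultimately show ?thesis using band_mono by (auto simp: collar_def base_part_Bg)
qed

lemma hg_inv_Bg:
  assumes "v \<in> collar"
  shows "hg_inv a b g (Bg a b g v) = Bg a b (\<lambda>_. 0) (hg_inv a b g v)"
proof -
  obtain x y z w where v: "v = (x, y, z, w)" by (cases v)
  have "(x, y) \<in> band base.collar_width" using assms v by (simp add: collar_def base_part_def)
  then have shift: "hg_shift a b g (bak a (x, y)) = g (x, y) + b * hg_shift a b g (x, y)"
    using hg_shift_bak[OF fiber.pos[THEN less_imp_le] fiber_less_1 Cb1] base.bak_inv_bak
    by (simp add: band_def)
  have lhs: "hg_inv a b g (Bg a b g v) = (fst (bak a (x, y)), snd (bak a (x, y)),
      fst (bak b (z, w)), snd (bak b (z, w)) + g (x, y) - hg_shift a b g (bak a (x, y)))"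
    by (simp add: v Bg_def hg_inv_eq)
  have rhs: "Bg a b (\<lambda>_. 0) (hg_inv a b g v) = (fst (bak a (x, y)), snd (bak a (x, y)),
      fst (bak b (z, w - hg_shift a b g (x, y))), snd (bak b (z, w - hg_shift a b g (x, y))))"
    by (simp add: v Bg_def hg_inv_eq)
  show ?thesis unfolding lhs rhs shift by (simp add: snd_bak algebra_simps fst_bak[of b z _ b])
qed

lemma hg_inv_Bg_iterate:
  "v \<in> collar \<Longrightarrow> hg_inv a b g ((Bg a b g ^^ n) v) = (Bg a b (\<lambda>_. 0) ^^ n) (hg_inv a b g v)"
proof (induction n arbitrary: v)
  case (Suc n)
  then show ?case
    using Bg_mem_collar hg_inv_Bg by (simp only: funpow_Suc_right o_apply)
qed simp

lemma bigA_subset_collar: "bigA a b \<subseteq> collar"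
proof
  fix v assume "v \<in> bigA a b"
  then have "fst (base_part v) \<in> {0..<1}" "snd (base_part v) \<in> {0..1}"
    using base.cantor_subset by (auto simp: mem_bigA_iff mem_Times_iff)
  then show "v \<in> collar"
    using base.collar_width_pos by (cases "base_part v") (auto simp: collar_def band_def)
qed

lemma Bg_zero_conjugate:
  assumes "v \<in> bigA a b"
  shows "Bg a b (\<lambda>_. 0) v = hg_inv a b g (Bg a b g (hg a b g v))"
proof -
  have "v \<in> collar" using assms bigA_subset_collar by blast
  then have "hg a b g v \<in> collar" by (simp add: collar_def)
  then show ?thesis using hg_inv_Bg hg_inv_hg by metis
qed

lemma Bg_hg: "v \<in> bigA a b \<Longrightarrow> Bg a b g (hg a b g v) = hg a b g (Bg a b (\<lambda>_. 0) v)"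
  using Bg_zero_conjugate hg_hg_inv by metis

lemma Bg_zero_surj_bigA:
  assumes "v \<in> bigA a b"
  obtains u where "u \<in> bigA a b" "Bg a b (\<lambda>_. 0) u = v"
proof -
  obtain x y z w where v: "v = (x, y, z, w)" by (cases v)
  have xy: "(x, y) \<in> {0..<1} \<times> cantor a" and zw: "(z, w) \<in> {0..<1} \<times> cantor b"
    using assms v by (auto simp: bigA_def)
  define u where "u = (fst (bak_inv a (x, y)), snd (bak_inv a (x, y)),
                       fst (bak_inv b (z, w)), snd (bak_inv b (z, w)))"
  have "u \<in> bigA a b"
    using base.bak_inv_mem[OF xy] fiber.bak_inv_mem[OF zw] by (simp add: u_def mem_bigA_iff base_part_def)
  moreover have "Bg a b (\<lambda>_. 0) u = v"
    using base.bak_bak_inv[OF xy] fiber.bak_bak_inv[OF zw] by (simp add: u_def v Bg_def)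
  ultimately show ?thesis using that by blast
qed

lemma Bg_mem_trapV:
  assumes "0 \<le> \<delta>" "v \<in> trapV b g \<delta>"
  shows "Bg a b g v \<in> trapV b g \<delta>"
proof -
  define S where "S = supnorm g"
  define T where "T = \<delta> + S / (1 - b)"
  have "0 \<le> S" using supnorm_nonneg[OF Cb1] by (simp add: S_def)
  then have "0 \<le> T" using assms(1) fiber_less_1 by (simp add: T_def)
  moreover have "b * T + S = T - (1 - b) * \<delta>" using fiber_less_1 by (simp add: T_def field_simps)
  moreover have "0 \<le> (1 - b) * \<delta>" using assms(1) fiber_less_1 by simp
  ultimately have T: "0 \<le> T" "b * T + S \<le> T" by simp_all
  obtain x y z w where v: "v = (x, y, z, w)" by (cases v)
  have xy: "(x, y) \<in> band \<delta>" and zw: "(z, w) \<in> band T"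
    using assms(2) v by (simp_all add: mem_trapV_iff base_part_def S_def T_def)
  have "bak a (x, y) \<in> band (a * \<delta>)"
    using xy assms(1) base.pos base.less_half by (intro bak_mem_band) auto
  moreover have "a * \<delta> \<le> \<delta>"
    by (rule mult_left_le_one_le) (use assms(1) base.pos base.less_half in auto)
  ultimately have base: "base_part (Bg a b g v) \<in> band \<delta>"
    using band_mono unfolding base_part_Bg by (auto simp: v base_part_def)
  have "bak b (z, w) \<in> band (b * T)"
    using zw T fiber.pos fiber_less_1 by (intro bak_mem_band) auto
  moreover have "\<bar>g (x, y)\<bar> \<le> S" using Cb1_abs_le_supnorm[OF Cb1] xy by (simp add: S_def strip_def band_def)
  moreover have "snd (snd (Bg a b g v)) = (fst (bak b (z, w)), snd (bak b (z, w)) + g (x, y))"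
    by (simp add: v Bg_def)
  ultimately have "snd (snd (Bg a b g v)) \<in> band T"
    using T by (cases "bak b (z, w)") (auto simp: band_def abs_le_iff)
  with base show ?thesis by (simp add: mem_trapV_iff S_def T_def)
qed

lemma hg_mem_trapV:
  assumes "0 \<le> \<delta>" "v \<in> bigA a b"
  shows "hg a b g v \<in> trapV b g \<delta>"
proof -
  obtain x y z w where v: "v = (x, y, z, w)" by (cases v)
  have "x \<in> {0..<1}" "y \<in> {0..1}" "z \<in> {0..<1}" "w \<in> {0..1}"
    using assms(2) v base.cantor_subset fiber.cantor_subset by (auto simp: bigA_def)
  moreover have "\<bar>hg_shift a b g (x, y)\<bar> \<le> supnorm g / (1 - b)"
    using abs_hg_shift_le[OF fiber.pos[THEN less_imp_le] fiber_less_1 Cb1] \<open>x \<in> {0..<1}\<close> by simp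
  ultimately show ?thesis using assms(1) by (auto simp: v hg_eq trapV_def abs_le_iff)
qed

lemma hg_bigA_subset_Ag:
  assumes "0 < \<delta>"
  shows "hg a b g ` bigA a b \<subseteq> Ag a b g \<delta>"
proof -
  have step: "hg a b g ` bigA a b \<subseteq> Bg a b g ` hg a b g ` bigA a b"
  proof
    fix p assume "p \<in> hg a b g ` bigA a b"
    then obtain v where v: "v \<in> bigA a b" "p = hg a b g v" by blast
    then obtain u where "u \<in> bigA a b" "Bg a b (\<lambda>_. 0) u = v" using Bg_zero_surj_bigA by blast
    then show "p \<in> Bg a b g ` hg a b g ` bigA a b" using Bg_hg v by (metis image_eqI)
  qed
  have "hg a b g ` bigA a b \<subseteq> (Bg a b g ^^ n) ` trapV b g \<delta>" for n
  proof (induction n)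
    case 0
    then show ?case using hg_mem_trapV assms by auto
  next
    case (Suc n)
    then have "Bg a b g ` hg a b g ` bigA a b \<subseteq> (Bg a b g ^^ Suc n) ` trapV b g \<delta>"
      by (auto simp: image_comp)
    then show ?case using step by blast
  qed
  then show ?thesis unfolding Ag_def by blast
qed

lemma Bg_iterate_trapV_collar:
  assumes "0 < \<delta>" "a ^ N * \<delta> \<le> base.collar_width" "v \<in> trapV b g \<delta>"
  shows "(Bg a b g ^^ N) v \<in> collar \<inter> trapV b g \<delta>"
proof -
  have "(bak a ^^ N) (base_part v) \<in> band (a ^ N * \<delta>)"
    using assms base.pos base.less_half by (intro bak_iterate_mem_band) (auto simp: mem_trapV_iff)
  then have "(Bg a b g ^^ N) v \<in> collar"
    using band_mono[OF assms(2)] by (auto simp: collar_def base_part_Bg_iterate)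
  moreover have "(Bg a b g ^^ N) v \<in> trapV b g \<delta>"
    by (induction N) (use assms Bg_mem_trapV in auto)
  ultimately show ?thesis by blast
qed

lemma hg_inv_mem_bands:
  assumes "0 \<le> \<delta>" "v \<in> collar \<inter> trapV b g \<delta>"
  defines "R \<equiv> base.collar_width + \<delta> + 2 * supnorm g / (1 - b)"
  shows "base_part (hg_inv a b g v) \<in> band R" "snd (snd (hg_inv a b g v)) \<in> band R"
proof -
  have S: "0 \<le> supnorm g / (1 - b)" using supnorm_nonneg[OF Cb1] fiber_less_1 by simp
  obtain x y z w where v: "v = (x, y, z, w)" by (cases v)
  have xy: "(x, y) \<in> band base.collar_width" and zw: "(z, w) \<in> band (\<delta> + supnorm g / (1 - b))"
    using assms(2) v by (auto simp: collar_def mem_trapV_iff base_part_def)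
  have "band base.collar_width \<subseteq> band R" using assms(1) S by (intro band_mono) (simp add: R_def)
  then show "base_part (hg_inv a b g v) \<in> band R" using xy by (auto simp: v base_part_def hg_inv_eq)
  have "\<bar>hg_shift a b g (x, y)\<bar> \<le> supnorm g / (1 - b)"
    using abs_hg_shift_le[OF fiber.pos[THEN less_imp_le] fiber_less_1 Cb1] xy by (simp add: band_def)
  then show "snd (snd (hg_inv a b g v)) \<in> band R"
    using zw base.collar_width_pos by (auto simp: v hg_inv_eq band_def R_def abs_le_iff)
qed

lemma hg_inv_Ag_subset_bigA:
  assumes "0 < \<delta>" "p \<in> Ag a b g \<delta>"
  shows "hg_inv a b g p \<in> bigA a b"
proof -
  define R where "R = base.collar_width + \<delta> + 2 * supnorm g / (1 - b)"
  have R: "0 \<le> R"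
    using assms(1) base.collar_width_pos supnorm_nonneg[OF Cb1] fiber_less_1 by (simp add: R_def)
  obtain N where "a ^ N < base.collar_width / \<delta>"
    using real_arch_pow_inv[of "base.collar_width / \<delta>" a] assms(1) base.collar_width_pos base.pos base.less_half
    by auto
  then have N: "a ^ N * \<delta> \<le> base.collar_width" using assms(1) by (simp add: field_simps)
  have "base_part (hg_inv a b g p) \<in> (bak a ^^ n) ` band R \<and>
        snd (snd (hg_inv a b g p)) \<in> (bak b ^^ n) ` band R" for n
  proof -
    obtain v0 where v0: "v0 \<in> trapV b g \<delta>" "p = (Bg a b g ^^ (n + N)) v0"
      using assms(2) unfolding Ag_def by blast
    define v where "v = (Bg a b g ^^ N) v0"
    have v: "v \<in> collar \<inter> trapV b g \<delta>" "p = (Bg a b g ^^ n) v"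
      using Bg_iterate_trapV_collar[OF assms(1) N v0(1)] v0(2) by (simp_all add: v_def funpow_add)
    then have "hg_inv a b g p = (Bg a b (\<lambda>_. 0) ^^ n) (hg_inv a b g v)"
      using hg_inv_Bg_iterate by blast
    then show ?thesis
      using hg_inv_mem_bands[OF _ v(1)] assms(1)
      by (auto simp: R_def base_part_Bg_iterate fiber_Bg_zero_iterate simp del: base_part_hg_inv)
  qed
  then show ?thesis
    using base.bak_iterates_subset_cantor[OF R] fiber.bak_iterates_subset_cantor[OF R]
    by (simp add: mem_bigA_iff)
qed

lemma hg_image_bigA: "0 < \<delta> \<Longrightarrow> hg a b g ` bigA a b = Ag a b g \<delta>"
  using hg_bigA_subset_Ag hg_inv_Ag_subset_bigA hg_hg_inv by (metis image_eqI subsetI subset_antisym)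

end

section \<open>Regularity of the conjugacy\<close>

lemma le_powr_mult_powr:
  fixes d D r :: real
  assumes "0 \<le> d" "d \<le> D" "r \<le> 1"
  shows "d \<le> D powr (1 - r) * d powr r"
proof (cases "d = 0")
  case False
  then have "d = d powr (1 - r) * d powr r" using assms(1) by (simp add: powr_add[symmetric])
  also have "\<dots> \<le> D powr (1 - r) * d powr r"
    using assms by (intro mult_right_mono powr_mono2) auto
  finally show ?thesis .
qed simp

lemma holder_on_of_bounded:
  assumes "bounded S" "r \<le> 1" "0 \<le> C"
    and "\<And>u v. u \<in> S \<Longrightarrow> v \<in> S \<Longrightarrow> dist (f u) (f v) \<le> dist u v + C * dist u v powr r"
  shows "holder_on S f r"
proof -
  obtain D where D: "\<And>u v. u \<in> S \<Longrightarrow> v \<in> S \<Longrightarrow> dist u v \<le> D"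
    using assms(1) unfolding bounded_two_points by blast
  have "dist (f u) (f v) \<le> (max D 0 powr (1 - r) + C) * dist u v powr r" if "u \<in> S" "v \<in> S" for u v
  proof -
    have "dist u v \<le> max D 0 powr (1 - r) * dist u v powr r"
      using D[OF that] assms(2) by (intro le_powr_mult_powr) auto
    then show ?thesis using assms(4)[OF that] by (simp add: algebra_simps)
  qed
  then show ?thesis unfolding holder_on_def by blast
qed

lemma holder_on_nonneg_const:
  assumes "holder_on S f r"
  obtains C where "0 \<le> C" "\<And>u v. u \<in> S \<Longrightarrow> v \<in> S \<Longrightarrow> dist (f u) (f v) \<le> C * dist u v powr r"
proof -
  obtain C where C: "\<And>u v. u \<in> S \<Longrightarrow> v \<in> S \<Longrightarrow> dist (f u) (f v) \<le> C * dist u v powr r"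
    using assms unfolding holder_on_def by blast
  have "C * dist u v powr r \<le> max C 0 * dist u v powr r" for u v by (intro mult_right_mono) auto
  then show ?thesis using that[of "max C 0"] C by (meson max.cobounded2 order_trans)
qed

lemma dist_shift_last:
  fixes x y z w c x' y' z' w' c' :: real
  shows "dist (x, y, z, w + c) (x', y', z', w' + c') \<le> dist (x, y, z, w) (x', y', z', w') + \<bar>c - c'\<bar>"
proof -
  have "dist (x, y, z, w + c) (x', y', z', w' + c') = norm ((x - x', y - y', z - z', w - w') + (0, 0, 0, c - c'))"
    by (simp add: dist_norm algebra_simps)
  also have "\<dots> \<le> norm (x - x', y - y', z - z', w - w') + norm ((0::real), (0::real), (0::real), c - c')"
    by (rule norm_triangle_ineq)
  finally show ?thesis by (simp add: dist_norm norm_Pair)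
qed

lemma dist_base_part_le: "dist (base_part u) (base_part v) \<le> dist u v"
proof -
  obtain x y p x' y' p' where uv: "u = (x, y, p)" "v = (x', y', p')" by (cases u, cases v) auto
  have "dist y y' \<le> dist (y, p) (y', p')" using dist_fst_le[of "(y, p)" "(y', p')"] by simp
  then have "sqrt ((dist x x')\<^sup>2 + (dist y y')\<^sup>2) \<le> sqrt ((dist x x')\<^sup>2 + (dist (y, p) (y', p'))\<^sup>2)"
    by (intro real_sqrt_le_mono add_left_mono power_mono) auto
  then show ?thesis by (simp add: uv base_part_def dist_Pair_Pair)
qed

lemma holder_on_of_base_holder:
  fixes f :: "real \<times> real \<times> real \<times> real \<Rightarrow> real \<times> real \<times> real \<times> real"
  assumes "bounded S" "0 < r" "r \<le> 1" "holder_on P \<phi> r"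
    and "\<And>u v. dist (f u) (f v) \<le> dist u v + \<bar>\<phi> (base_part u) - \<phi> (base_part v)\<bar>"
    and "base_part ` S \<subseteq> P"
  shows "holder_on S f r"
proof -
  obtain C where C: "0 \<le> C" "\<And>p p'. p \<in> P \<Longrightarrow> p' \<in> P \<Longrightarrow> \<bar>\<phi> p - \<phi> p'\<bar> \<le> C * dist p p' powr r"
    using holder_on_nonneg_const[OF assms(4)] by (auto simp: dist_real_def)
  show ?thesis
  proof (rule holder_on_of_bounded[OF assms(1,3) C(1)])
    fix u v assume "u \<in> S" "v \<in> S"
    then have "\<bar>\<phi> (base_part u) - \<phi> (base_part v)\<bar> \<le> C * dist (base_part u) (base_part v) powr r"
      using C(2) assms(6) by blast
    also have "\<dots> \<le> C * dist u v powr r"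
      using dist_base_part_le assms(2) C(1) by (intro mult_left_mono powr_mono2) auto
    finally show "dist (f u) (f v) \<le> dist u v + C * dist u v powr r"
      using assms(5)[of u v] by linarith
  qed
qed

lemma dist_hg_le:
  "dist (hg a b g u) (hg a b g v) \<le> dist u v + \<bar>hg_shift a b g (base_part u) - hg_shift a b g (base_part v)\<bar>"
  by (cases u, cases v) (simp add: hg_eq base_part_def dist_shift_last)

lemma dist_hg_inv_le:
  "dist (hg_inv a b g u) (hg_inv a b g v) \<le> dist u v + \<bar>hg_shift a b g (base_part u) - hg_shift a b g (base_part v)\<bar>"
  using dist_shift_last[of _ _ _ _ "- hg_shift a b g (base_part u)" _ _ _ _ "- hg_shift a b g (base_part v)"]
  by (cases u, cases v) (simp add: hg_inv_eq base_part_def abs_minus_commute)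

lemma bounded_unit_interval: "bounded {0::real..<1}"
  by (rule bounded_subset[OF bounded_closed_interval[of 0 1]]) auto

lemma bounded_trapV: "bounded (trapV b g \<delta>)"
  unfolding trapV_def by (intro bounded_Times bounded_unit_interval bounded_closed_interval)

context baker_ratio
begin

(* Points in the same half are pulled apart vertically by the factor 1/a; points in different
   halves lie on opposite sides of the gap (a, 1 - a) of the Cantor set. *)
lemma bak_inv_iterate_expands_or_far:
  assumes p: "p \<in> {0..<1} \<times> cantor a" and p': "p' \<in> {0..<1} \<times> cantor a"
  shows "(\<bar>fst ((bak_inv a ^^ k) p) - fst ((bak_inv a ^^ k) p')\<bar> \<le> \<bar>fst p - fst p'\<bar> \<and>
          \<bar>snd ((bak_inv a ^^ k) p) - snd ((bak_inv a ^^ k) p')\<bar> = \<bar>snd p - snd p'\<bar> / a ^ k)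
         \<or> a ^ k * (1 - 2*a) \<le> \<bar>snd p - snd p'\<bar>"
proof (induction k)
  case (Suc k)
  obtain u v where uv: "(bak_inv a ^^ k) p = (u, v)" by (cases "(bak_inv a ^^ k) p")
  obtain u' v' where uv': "(bak_inv a ^^ k) p' = (u', v')" by (cases "(bak_inv a ^^ k) p'")
  have mem: "(u, v) \<in> {0..<1} \<times> cantor a" "(u', v') \<in> {0..<1} \<times> cantor a"
    using bak_inv_iterate_mem[OF p, of k] bak_inv_iterate_mem[OF p', of k] uv uv' by auto
  have shrink: "a ^ Suc k * (1 - 2*a) \<le> a ^ k * (1 - 2*a)"
    using pos less_half by (intro mult_right_mono) (auto simp: mult_le_cancel_right1)
  from Suc show ?case
  proof
    assume "\<bar>fst ((bak_inv a ^^ k) p) - fst ((bak_inv a ^^ k) p')\<bar> \<le> \<bar>fst p - fst p'\<bar> \<and>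
            \<bar>snd ((bak_inv a ^^ k) p) - snd ((bak_inv a ^^ k) p')\<bar> = \<bar>snd p - snd p'\<bar> / a ^ k"
    then have IH: "\<bar>u - u'\<bar> \<le> \<bar>fst p - fst p'\<bar>" "\<bar>v - v'\<bar> = \<bar>snd p - snd p'\<bar> / a ^ k"
      using uv uv' by auto
    show ?thesis
    proof (cases "v \<le> 1/2 \<longleftrightarrow> v' \<le> 1/2")
      case True
      then have "\<bar>fst (bak_inv a (u, v)) - fst (bak_inv a (u', v'))\<bar> = \<bar>u - u'\<bar> / 2"
        "\<bar>snd (bak_inv a (u, v)) - snd (bak_inv a (u', v'))\<bar> = \<bar>v - v'\<bar> / a"
        using pos by (auto simp: bak_inv_def abs_divide diff_divide_distrib[symmetric])
      moreover have "\<bar>u - u'\<bar> / 2 \<le> \<bar>u - u'\<bar>" by simp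
      then have "\<bar>u - u'\<bar> / 2 \<le> \<bar>fst p - fst p'\<bar>" using IH(1) by linarith
      ultimately show ?thesis using IH(2) uv uv' by simp
    next
      case False
      then have "1 - 2*a \<le> \<bar>v - v'\<bar>"
        using cantor_low_branch cantor_high_branch mem by fastforce
      then have "a ^ k * (1 - 2*a) \<le> \<bar>snd p - snd p'\<bar>" using IH(2) pos by (simp add: field_simps)
      then show ?thesis using shrink by auto
    qed
  next
    assume "a ^ k * (1 - 2*a) \<le> \<bar>snd p - snd p'\<bar>"
    then show ?thesis using shrink by auto
  qed
qed simp

lemma abs_diff_g_bak_inv_iterate_le:
  fixes g :: "real \<times> real \<Rightarrow> real"
  assumes L: "0 \<le> L" "\<And>p q. p \<in> strip \<Longrightarrow> q \<in> strip \<Longrightarrow> \<bar>g p - g q\<bar> \<le> L * dist p q"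
    and S: "0 \<le> S" "\<And>p. p \<in> strip \<Longrightarrow> \<bar>g p\<bar> \<le> S"
    and p: "p \<in> {0..<1} \<times> cantor a" and p': "p' \<in> {0..<1} \<times> cantor a"
  defines "M \<equiv> L + 2 * S / (1 - 2*a)"
  shows "\<bar>g ((bak_inv a ^^ k) p) - g ((bak_inv a ^^ k) p')\<bar>
          \<le> L * \<bar>fst p - fst p'\<bar> + M * min 1 (\<bar>snd p - snd p'\<bar> / a ^ k)"
proof -
  define q q' where "q = (bak_inv a ^^ k) p" and "q' = (bak_inv a ^^ k) p'"
  define d t where "d = \<bar>fst p - fst p'\<bar>" and "t = \<bar>snd p - snd p'\<bar>"
  have q: "q \<in> strip" "q' \<in> strip"
    using bak_inv_iterate_mem[OF p, of k] bak_inv_iterate_mem[OF p', of k]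
    by (simp_all add: q_def q'_def strip_def mem_Times_iff)
  have two_S: "\<bar>g q - g q'\<bar> \<le> 2 * S" using S(2)[OF q(1)] S(2)[OF q(2)] by linarith
  have frac: "0 \<le> 2 * S / (1 - 2*a)" "2 * S \<le> 2 * S / (1 - 2*a)"
    using pos less_half S(1) by (simp_all add: le_divide_eq mult_left_le)
  have "M * (1 - 2*a) = L * (1 - 2*a) + 2 * S" using less_half by (simp add: M_def field_simps)
  moreover have "0 \<le> L * (1 - 2*a)" using L(1) less_half by simp
  ultimately have M: "L \<le> M" "2 * S \<le> M" "2 * S \<le> M * (1 - 2*a)"
    using frac L(1) by (simp_all add: M_def)
  have Ld: "0 \<le> L * d" using L(1) by (simp add: d_def)
  have "0 \<le> t / a ^ k" using pos by (simp add: t_def)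
  from bak_inv_iterate_expands_or_far[OF p p', of k]
  have "\<bar>g q - g q'\<bar> \<le> L * d + M * min 1 (t / a ^ k)"
    unfolding q_def[symmetric] q'_def[symmetric] d_def[symmetric] t_def[symmetric]
  proof
    assume close: "\<bar>fst q - fst q'\<bar> \<le> d \<and> \<bar>snd q - snd q'\<bar> = t / a ^ k"
    have "dist q q' \<le> \<bar>fst q - fst q'\<bar> + \<bar>snd q - snd q'\<bar>"
      using norm_Pair_le[of "fst q - fst q'" "snd q - snd q'"] by (cases q, cases q') (simp add: dist_norm)
    then have "dist q q' \<le> d + t / a ^ k" using close by linarith
    then have "\<bar>g q - g q'\<bar> \<le> L * (d + t / a ^ k)"
      using L(2)[OF q] L(1) by (meson mult_left_mono order_trans)
    then have bound: "\<bar>g q - g q'\<bar> \<le> L * d + L * (t / a ^ k)" by (simp add: distrib_left)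
    show ?thesis
    proof (cases "t / a ^ k \<le> 1")
      case True
      have "L * (t / a ^ k) \<le> M * (t / a ^ k)" using M(1) \<open>0 \<le> t / a ^ k\<close> by (rule mult_right_mono)
      also have "M * (t / a ^ k) = M * min 1 (t / a ^ k)" using True by simp
      finally show ?thesis using bound by linarith
    next
      case False
      then show ?thesis using two_S M Ld by simp
    qed
  next
    assume far: "a ^ k * (1 - 2*a) \<le> t"
    have "1 - 2*a \<le> min 1 (t / a ^ k)" using far pos by (simp add: le_divide_eq mult.commute)
    then have "M * (1 - 2*a) \<le> M * min 1 (t / a ^ k)"
      using M L(1) by (intro mult_left_mono) auto
    then show ?thesis using two_S M Ld by linarith
  qed
  then show ?thesis by (simp add: q_def q'_def d_def t_def)
qed

end

(* Up to constants, the i-th term bounds the contribution of bak_inv a ^^ Suc i to the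
   vertical modulus of continuity of hg_shift at vertical distance t. *)
definition shift_modulus :: "real \<Rightarrow> real \<Rightarrow> real \<Rightarrow> real" where
  "shift_modulus a b t = (\<Sum>i. b ^ i * min 1 (t / a ^ Suc i))"

lemma shift_modulus_summable:
  fixes a b t :: real
  assumes "0 < a" "0 \<le> b" "b < 1" "0 \<le> t"
  shows "summable (\<lambda>i. b ^ i * min 1 (t / a ^ Suc i))"
proof (rule summable_comparison_test')
  show "summable (\<lambda>i. b ^ i)" using assms by simp
  fix i
  have "0 \<le> min 1 (t / a ^ Suc i)" "min 1 (t / a ^ Suc i) \<le> 1" using assms by auto
  then show "norm (b ^ i * min 1 (t / a ^ Suc i)) \<le> b ^ i"
    using assms by (simp add: abs_mult mult_left_le)
qed

lemma min_one_le_powr: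
  fixes s r :: real
  assumes "0 \<le> s" "0 < r" "r \<le> 1"
  shows "min 1 s \<le> s powr r"
proof (cases "s \<le> 1")
  case True
  then show ?thesis
    using powr_mono'[of r 1 s] assms by (cases "s = 0") auto
next
  case False
  then show ?thesis using ge_one_powr_ge_zero[of s r] assms by simp
qed

lemma power_powr_eq: "0 < a \<Longrightarrow> ((a::real) ^ n) powr r = (a powr r) ^ n"
  by (simp add: powr_realpow[symmetric] powr_powr powr_power mult.commute)

lemma shift_modulus_le_powr:
  fixes a b r t :: real
  assumes a: "0 < a" and b: "0 \<le> b" and r: "0 < r" "r \<le> 1" and ba: "b < a powr r" and t: "0 \<le> t"
  shows "shift_modulus a b t \<le> t powr r / (a powr r - b)"
proof -
  define A where "A = a powr r"
  have A: "0 < A" "0 \<le> b / A" "b / A < 1" using ba b a by (auto simp: A_def)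
  have term_eq: "b ^ i * (t / a ^ Suc i) powr r = (t powr r / A) * (b / A) ^ i" for i
  proof -
    have "(t / a ^ Suc i) powr r = t powr r / A ^ Suc i"
      using a t by (simp add: powr_divide power_powr_eq A_def del: power_Suc)
    then show ?thesis using A by (simp add: power_divide field_simps)
  qed
  have le_term: "b ^ i * min 1 (t / a ^ Suc i) \<le> (t powr r / A) * (b / A) ^ i" for i
  proof -
    have "b ^ i * min 1 (t / a ^ Suc i) \<le> b ^ i * (t / a ^ Suc i) powr r"
      using min_one_le_powr[of "t / a ^ Suc i" r] a b r t by (intro mult_left_mono) auto
    then show ?thesis by (simp only: term_eq)
  qed
  have majorant: "summable (\<lambda>i. (t powr r / A) * (b / A) ^ i)" using A b by simp
  have "summable (\<lambda>i. b ^ i * min 1 (t / a ^ Suc i))"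
    using le_term a b t by (intro summable_comparison_test'[OF majorant]) (simp add: abs_mult)
  then have "shift_modulus a b t \<le> (\<Sum>i. (t powr r / A) * (b / A) ^ i)"
    unfolding shift_modulus_def using le_term majorant by (intro suminf_le) auto
  also have "\<dots> = (t powr r / A) * (1 / (1 - b / A))"
    using sums_mult[OF geometric_sums[of "b / A"], of "t powr r / A"] A b by (simp add: sums_iff)
  also have "\<dots> = t powr r / (A - b)" using A by (simp add: field_simps)
  finally show ?thesis by (simp add: A_def)
qed

lemma shift_modulus_le_of_le_power:
  fixes a b t :: real
  assumes a: "0 < a" "a < b" and b: "b < 1" and t: "0 \<le> t" "t \<le> a ^ m"
  shows "shift_modulus a b t \<le> b ^ m * (1 / (b - a) + 1 / (1 - b))"
proof -
  define f where "f i = b ^ i * min 1 (t / a ^ Suc i)" for i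
  have b0: "0 \<le> b" using a by simp
  have "summable f" unfolding f_def using a b t by (intro shift_modulus_summable) auto
  then have split: "shift_modulus a b t = (\<Sum>i. f (i + m)) + (\<Sum>i<m. f i)"
    unfolding shift_modulus_def f_def[symmetric] by (rule suminf_split_initial_segment)
  have "f i \<le> a ^ (m - Suc i) * b ^ i" if "i < m" for i
  proof -
    have "f i \<le> b ^ i * (t / a ^ Suc i)" unfolding f_def using b0 by (intro mult_left_mono) auto
    also have "\<dots> \<le> b ^ i * (a ^ m / a ^ Suc i)" using t a b0 by (intro mult_left_mono divide_right_mono) auto
    also have "a ^ m / a ^ Suc i = a ^ (m - Suc i)" using a that by (simp add: power_diff)
    finally show ?thesis by (simp add: mult.commute)
  qed
  then have "(\<Sum>i<m. f i) \<le> (\<Sum>i<m. a ^ (m - Suc i) * b ^ i)" by (intro sum_mono) auto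
  also have "\<dots> = (b ^ m - a ^ m) / (b - a)" using power_diff_sumr2[of b m a] a by simp
  also have "\<dots> \<le> b ^ m / (b - a)" using a by (intro divide_right_mono) auto
  finally have head: "(\<Sum>i<m. f i) \<le> b ^ m / (b - a)" .
  have f_tail: "f (i + m) \<le> b ^ m * b ^ i" for i
  proof -
    have "f (i + m) \<le> b ^ (i + m)" unfolding f_def using b0 by (simp add: mult_left_le)
    then show ?thesis by (simp add: power_add mult.commute)
  qed
  have geometric: "(\<lambda>i. b ^ m * b ^ i) sums (b ^ m / (1 - b))"
    using sums_mult[OF geometric_sums[of b], of "b ^ m"] b0 b by simp
  have tail: "(\<Sum>i. f (i + m)) \<le> b ^ m / (1 - b)"
    using suminf_le[OF f_tail summable_ignore_initial_segment[OF \<open>summable f\<close>] sums_summable[OF geometric]]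
      geometric by (simp add: sums_iff)
  show ?thesis using split head tail by (simp add: distrib_left)
qed

lemma shift_modulus_le_log_ratio:
  fixes a b t :: real
  assumes a: "0 < a" "a < b" and b: "b < 1" and t: "0 \<le> t" "t \<le> 1"
  shows "shift_modulus a b t \<le> ((1 / (b - a) + 1 / (1 - b)) / b) * t powr (ln b / ln a)"
proof (cases "t = 0")
  case True
  then show ?thesis by (simp add: shift_modulus_def)
next
  case False
  define r where "r = ln b / ln a"
  have "ln a < ln b" "ln b < 0" using a b by simp_all
  then have r: "0 < r" and "a powr r = b" using a by (simp_all add: r_def powr_def divide_neg_neg)
  (* Since a powr r = b, the bound b^m of the previous lemma is at most t powr r / b. *)
  obtain m where m: "a ^ Suc m < t" "t \<le> a ^ m"
    using exists_least_lemma[of "\<lambda>n. a ^ n < t"] real_arch_pow_inv[of t a] False t a b by force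
  have "(a ^ Suc m) powr r < t powr r" using m(1) r a by (intro powr_less_mono2) auto
  then have "b ^ Suc m < t powr r" using a \<open>a powr r = b\<close> by (simp add: power_powr_eq del: power_Suc)
  then have "b ^ m \<le> t powr r / b" using a by (simp add: field_simps)
  moreover have "0 \<le> 1 / (b - a) + 1 / (1 - b)" using a b by simp
  ultimately have "b ^ m * (1 / (b - a) + 1 / (1 - b)) \<le> t powr r / b * (1 / (b - a) + 1 / (1 - b))"
    by (rule mult_right_mono)
  then show ?thesis using shift_modulus_le_of_le_power[OF a b t(1) m(2)] by (simp add: r_def field_simps)
qed

context baker_skew
begin

lemma bounded_bigA: "bounded (bigA a b)"
  unfolding bigA_def using base.cantor_subset fiber.cantor_subset
  by (intro bounded_Times bounded_unit_interval bounded_subset[OF bounded_closed_interval])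

lemma bounded_Ag: "bounded (Ag a b g \<delta>)"
proof -
  have "Ag a b g \<delta> \<subseteq> (Bg a b g ^^ 0) ` trapV b g \<delta>" unfolding Ag_def by blast
  then show ?thesis using bounded_subset[OF bounded_trapV] by simp
qed

lemma base_part_Ag: "0 < \<delta> \<Longrightarrow> v \<in> Ag a b g \<delta> \<Longrightarrow> base_part v \<in> {0..<1} \<times> cantor a"
  using hg_inv_Ag_subset_bigA[of \<delta> v] by (simp add: mem_bigA_iff)

lemma abs_hg_shift_diff_le:
  obtains L M where "0 \<le> L" "0 \<le> M"
    "\<And>p p'. p \<in> {0..<1} \<times> cantor a \<Longrightarrow> p' \<in> {0..<1} \<times> cantor a \<Longrightarrow>
       \<bar>hg_shift a b g p - hg_shift a b g p'\<bar> \<le> L * \<bar>fst p - fst p'\<bar> + M * shift_modulus a b \<bar>snd p - snd p'\<bar>"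
proof -
  obtain L where L: "0 \<le> L" "\<And>p q. p \<in> strip \<Longrightarrow> q \<in> strip \<Longrightarrow> \<bar>g p - g q\<bar> \<le> L * dist p q"
    using Cb1_lipschitz[OF Cb1] by blast
  define S where "S = supnorm g"
  have S: "0 \<le> S" "\<And>p. p \<in> strip \<Longrightarrow> \<bar>g p\<bar> \<le> S"
    using supnorm_nonneg[OF Cb1] Cb1_abs_le_supnorm[OF Cb1] by (auto simp: S_def)
  define M where "M = L + 2 * S / (1 - 2*a)"
  have b: "0 \<le> b" "b < 1" using fiber.pos fiber_less_1 by simp_all
  have "\<bar>hg_shift a b g p - hg_shift a b g p'\<bar> \<le> L / (1 - b) * \<bar>fst p - fst p'\<bar> + M * shift_modulus a b \<bar>snd p - snd p'\<bar>"
    if p: "p \<in> {0..<1} \<times> cantor a" and p': "p' \<in> {0..<1} \<times> cantor a" for p p'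
  proof -
    define d t where "d = \<bar>fst p - fst p'\<bar>" and "t = \<bar>snd p - snd p'\<bar>"
    have diff: "(\<lambda>i. b ^ i * g ((bak_inv a ^^ Suc i) p) - b ^ i * g ((bak_inv a ^^ Suc i) p'))
            sums (hg_shift a b g p - hg_shift a b g p')"
      using p p' by (intro sums_diff hg_shift_sums[OF b Cb1]) auto
    have majorant: "(\<lambda>i. b ^ i * (L * d) + M * (b ^ i * min 1 (t / a ^ Suc i)))
            sums (L * d / (1 - b) + M * shift_modulus a b t)"
      using sums_mult2[OF geometric_sums[of b], of "L * d"] b
        sums_mult[OF summable_sums[OF shift_modulus_summable[OF base.pos b, of t]], of M]
      by (intro sums_add) (simp_all add: t_def shift_modulus_def)
    have bound: "norm (b ^ i * g ((bak_inv a ^^ Suc i) p) - b ^ i * g ((bak_inv a ^^ Suc i) p'))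
            \<le> b ^ i * (L * d) + M * (b ^ i * min 1 (t / a ^ Suc i))" for i
    proof -
      have "b ^ i * \<bar>g ((bak_inv a ^^ Suc i) p) - g ((bak_inv a ^^ Suc i) p')\<bar>
              \<le> b ^ i * (L * d + M * min 1 (t / a ^ Suc i))"
        using base.abs_diff_g_bak_inv_iterate_le[OF L S p p', of "Suc i"] b
        by (intro mult_left_mono) (auto simp: M_def d_def t_def)
      moreover have "\<bar>b ^ i * g ((bak_inv a ^^ Suc i) p) - b ^ i * g ((bak_inv a ^^ Suc i) p')\<bar>
          = b ^ i * \<bar>g ((bak_inv a ^^ Suc i) p) - g ((bak_inv a ^^ Suc i) p')\<bar>"
        using b by (simp add: abs_mult right_diff_distrib[symmetric])
      moreover have "b ^ i * (L * d + M * min 1 (t / a ^ Suc i))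
          = b ^ i * (L * d) + M * (b ^ i * min 1 (t / a ^ Suc i))" by (simp add: algebra_simps)
      ultimately show ?thesis by simp
    qed
    show ?thesis
      using norm_suminf_le[OF bound sums_summable[OF majorant]] diff majorant
      by (simp add: sums_iff d_def t_def)
  qed
  moreover have "0 \<le> L / (1 - b)" "0 \<le> M"
    using L(1) S(1) b base.less_half by (simp_all add: M_def)
  ultimately show ?thesis using that by blast
qed

lemma holder_on_hg_shift:
  assumes r: "0 < r" "r \<le> 1" and K: "0 \<le> K" "\<And>t. 0 \<le> t \<Longrightarrow> t \<le> 1 \<Longrightarrow> shift_modulus a b t \<le> K * t powr r"
  shows "holder_on ({0..<1} \<times> cantor a) (hg_shift a b g) r"
proof -
  obtain L M where LM: "0 \<le> L" "0 \<le> M"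
    "\<And>p p'. p \<in> {0..<1} \<times> cantor a \<Longrightarrow> p' \<in> {0..<1} \<times> cantor a \<Longrightarrow>
       \<bar>hg_shift a b g p - hg_shift a b g p'\<bar> \<le> L * \<bar>fst p - fst p'\<bar> + M * shift_modulus a b \<bar>snd p - snd p'\<bar>"
    using abs_hg_shift_diff_le by blast
  have "\<bar>hg_shift a b g p - hg_shift a b g p'\<bar> \<le> (L * 2 powr (1 - r) + M * K) * dist p p' powr r"
    if p: "p \<in> {0..<1} \<times> cantor a" and p': "p' \<in> {0..<1} \<times> cantor a" for p p'
  proof -
    define d where "d = dist p p'"
    have unit: "fst p \<in> {0..<1}" "fst p' \<in> {0..<1}" "snd p \<in> {0..1}" "snd p' \<in> {0..1}"
      using p p' base.cantor_subset by (auto simp: mem_Times_iff)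
    have "\<bar>fst p - fst p'\<bar> \<le> d" "\<bar>snd p - snd p'\<bar> \<le> d"
      using dist_fst_le[of p p'] dist_snd_le[of p p'] by (simp_all add: d_def dist_real_def)
    moreover have "\<bar>snd p - snd p'\<bar> \<le> 1" using unit by (auto simp: abs_le_iff)
    moreover have "d \<le> 2"
    proof -
      have "d \<le> \<bar>fst p - fst p'\<bar> + \<bar>snd p - snd p'\<bar>"
        using norm_Pair_le[of "fst p - fst p'" "snd p - snd p'"] by (cases p, cases p') (simp add: d_def dist_norm)
      also have "\<dots> \<le> 2" using unit by (auto simp: abs_le_iff)
      finally show ?thesis .
    qed
    ultimately have "\<bar>fst p - fst p'\<bar> \<le> 2 powr (1 - r) * d powr r"
      "shift_modulus a b \<bar>snd p - snd p'\<bar> \<le> K * d powr r"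
      using le_powr_mult_powr[of d 2 r] K(2)[of "\<bar>snd p - snd p'\<bar>"]
        mult_left_mono[OF powr_mono2[of r "\<bar>snd p - snd p'\<bar>" d] K(1)] r
      by (simp_all add: d_def)
    then have "L * \<bar>fst p - fst p'\<bar> \<le> L * (2 powr (1 - r) * d powr r)"
      "M * shift_modulus a b \<bar>snd p - snd p'\<bar> \<le> M * (K * d powr r)"
      using LM(1,2) by (simp_all add: mult_left_mono)
    then show ?thesis using LM(3)[OF p p'] by (simp add: d_def algebra_simps)
  qed
  then show ?thesis unfolding holder_on_def dist_real_def by blast
qed

lemma holder_on_hg:
  assumes "0 < r" "r \<le> 1" "holder_on ({0..<1} \<times> cantor a) (hg_shift a b g) r"
  shows "holder_on (bigA a b) (hg a b g) r"
  by (rule holder_on_of_base_holder[OF bounded_bigA assms dist_hg_le]) (auto simp: mem_bigA_iff)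

lemma holder_on_hg_inv:
  assumes "0 < \<delta>" "0 < r" "r \<le> 1" "holder_on ({0..<1} \<times> cantor a) (hg_shift a b g) r"
  shows "holder_on (Ag a b g \<delta>) (hg_inv a b g) r"
  by (rule holder_on_of_base_holder[OF bounded_Ag assms(2-4) dist_hg_inv_le])
     (use base_part_Ag[OF assms(1)] in blast)

lemma bilipschitz_hg:
  assumes "holder_on ({0..<1} \<times> cantor a) (hg_shift a b g) 1"
  shows "bilipschitz_on (bigA a b) (hg a b g)"
proof -
  obtain C where C: "0 \<le> C" and shift: "\<And>p p'. p \<in> {0..<1} \<times> cantor a \<Longrightarrow> p' \<in> {0..<1} \<times> cantor a \<Longrightarrow>
      \<bar>hg_shift a b g p - hg_shift a b g p'\<bar> \<le> C * dist p p'"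
    using holder_on_nonneg_const[OF assms] by (auto simp: dist_real_def)
  show ?thesis
    unfolding bilipschitz_on_def
  proof (intro exI[of _ "1 + C"] conjI ballI)
    fix u v assume "u \<in> bigA a b" "v \<in> bigA a b"
    then have "\<bar>hg_shift a b g (base_part u) - hg_shift a b g (base_part v)\<bar>
        \<le> C * dist (base_part u) (base_part v)"
      using shift by (simp add: mem_bigA_iff)
    moreover have "C * dist (base_part u) (base_part v) \<le> C * dist u v"
      "C * dist (base_part u) (base_part v) \<le> C * dist (hg a b g u) (hg a b g v)"
      using dist_base_part_le[of u v] dist_base_part_le[of "hg a b g u" "hg a b g v"] C
      by (simp_all add: mult_left_mono)
    ultimately show "dist (hg a b g u) (hg a b g v) \<le> (1 + C) * dist u v"
      and "dist u v \<le> (1 + C) * dist (hg a b g u) (hg a b g v)"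
      using dist_hg_le[of a b g u v] dist_hg_inv_le[of a b g "hg a b g u" "hg a b g v"]
      by (simp_all add: hg_inv_hg algebra_simps)
  qed (use C in simp)
qed

lemma bilipschitz_hg_of_less:
  assumes "b < a"
  shows "bilipschitz_on (bigA a b) (hg a b g)"
proof (rule bilipschitz_hg, rule holder_on_hg_shift)
  show "shift_modulus a b t \<le> 1 / (a - b) * t powr 1" if "0 \<le> t" for t
    using shift_modulus_le_powr[of a b 1 t] base.pos fiber.pos assms that by simp
qed (use assms in simp_all)

lemma holder_hg_of_eq:
  assumes "a = b" "0 < r" "r < 1" "0 < \<delta>"
  shows "holder_on (bigA a b) (hg a b g) r \<and> holder_on (Ag a b g \<delta>) (hg_inv a b g) r"
proof -
  have "a powr 1 < a powr r" using powr_less_mono'[of a r 1] base.pos base.less_half assms(3) by simp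
  then have ba: "b < a powr r" using assms(1) base.pos by simp
  have "shift_modulus a b t \<le> 1 / (a powr r - b) * t powr r" if "0 \<le> t" for t
    using shift_modulus_le_powr[OF base.pos _ assms(2) _ ba that] fiber.pos assms(3) by simp
  then have "holder_on ({0..<1} \<times> cantor a) (hg_shift a b g) r"
    using ba assms(2,3) by (intro holder_on_hg_shift[where K = "1 / (a powr r - b)"]) auto
  then show ?thesis using holder_on_hg holder_on_hg_inv assms(2-4) by simp
qed

lemma holder_hg_of_less:
  assumes "a < b"
  shows "holder_on (bigA a b) (hg a b g) (ln b / ln a)"
proof -
  have "ln a < ln b" "ln b < 0" using assms base.pos fiber_less_1 by simp_all
  then have r: "0 < ln b / ln a" "ln b / ln a \<le> 1" by (simp_all add: divide_neg_neg divide_le_eq)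
  have "0 \<le> (1 / (b - a) + 1 / (1 - b)) / b" using assms fiber.pos fiber_less_1 by simp
  then have "holder_on ({0..<1} \<times> cantor a) (hg_shift a b g) (ln b / ln a)"
    using shift_modulus_le_log_ratio[OF base.pos assms fiber_less_1] by (intro holder_on_hg_shift[OF r])
  then show ?thesis using holder_on_hg r by blast
qed

end

theorem proposition3p3:
  fixes \<alpha> \<beta> \<delta> :: real and g :: "real \<times> real \<Rightarrow> real"
  assumes "0 < \<alpha>" "\<alpha> < 1/2" "0 < \<beta>" "\<beta> < 1/2" "Cb1 g" "0 < \<delta>"
  shows "(\<forall>(x, y, z, w)\<in>bigA \<alpha> \<beta>.
            (\<forall>i. (bak_inv \<alpha> ^^ i) (x, y) \<in> {0..<1} \<times> cantor \<alpha>) \<and>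
            summable (\<lambda>i. \<beta> ^ i * g ((bak_inv \<alpha> ^^ Suc i) (x, y))))
       \<and> inj_on (hg \<alpha> \<beta> g) (bigA \<alpha> \<beta>)
       \<and> hg \<alpha> \<beta> g ` bigA \<alpha> \<beta> = Ag \<alpha> \<beta> g \<delta>
       \<and> (\<forall>v\<in>bigA \<alpha> \<beta>. hg_inv \<alpha> \<beta> g (hg \<alpha> \<beta> g v) = v)
       \<and> (\<forall>v\<in>Ag \<alpha> \<beta> g \<delta>. hg_inv \<alpha> \<beta> g v \<in> bigA \<alpha> \<beta> \<and> hg \<alpha> \<beta> g (hg_inv \<alpha> \<beta> g v) = v)
       \<and> (\<forall>v\<in>bigA \<alpha> \<beta>. Bg \<alpha> \<beta> (\<lambda>_. 0) v = hg_inv \<alpha> \<beta> g (Bg \<alpha> \<beta> g (hg \<alpha> \<beta> g v)))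
       \<and> (\<beta> < \<alpha> \<longrightarrow> bilipschitz_on (bigA \<alpha> \<beta>) (hg \<alpha> \<beta> g))
       \<and> (\<alpha> = \<beta> \<longrightarrow> (\<forall>\<rho>. 0 < \<rho> \<and> \<rho> < 1 \<longrightarrow>
              holder_on (bigA \<alpha> \<beta>) (hg \<alpha> \<beta> g) \<rho> \<and>
              holder_on (Ag \<alpha> \<beta> g \<delta>) (hg_inv \<alpha> \<beta> g) \<rho>))
       \<and> (\<alpha> < \<beta> \<longrightarrow> holder_on (bigA \<alpha> \<beta>) (hg \<alpha> \<beta> g) (ln \<beta> / ln \<alpha>))"
proof -
  interpret baker_skew \<alpha> \<beta> g
    using assms by unfold_locales
  have well_defined: "(\<forall>i. (bak_inv \<alpha> ^^ i) (x, y) \<in> {0..<1} \<times> cantor \<alpha>) \<and>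
      summable (\<lambda>i. \<beta> ^ i * g ((bak_inv \<alpha> ^^ Suc i) (x, y)))" if "(x, y, z, w) \<in> bigA \<alpha> \<beta>" for x y z w
    using that base.bak_inv_iterate_mem hg_shift_sums[of \<beta> g "(x, y)" \<alpha>] assms(3,5) fiber_less_1
    by (auto simp: bigA_def sums_iff)
  have "inj_on (hg \<alpha> \<beta> g) (bigA \<alpha> \<beta>)"
    by (rule inj_on_inverseI[of _ "hg_inv \<alpha> \<beta> g"]) (rule hg_inv_hg)
  then show ?thesis
    using well_defined hg_image_bigA[OF assms(6)] hg_inv_hg hg_inv_Ag_subset_bigA[OF assms(6)] hg_hg_inv
      Bg_zero_conjugate bilipschitz_hg_of_less holder_hg_of_eq[OF _ _ _ assms(6)] holder_hg_of_less
    by auto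
qed

end
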